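(* Let $(R,\mathfrak m)$ be a Noetherian local ring and let $T$ be an indeterminate. Then $\operatorname{gr}_{(\mathfrak m,T)}(R[T]) = \operatorname{gr}_{\mathfrak m}(R)[T]$. Moreover, via this identification, for any $T$-homogeneous ideal $I=\sum_{k\ge 0} I_k T^k$ of $R[T]$ (where each $I_k$ is an ideal of $R$), the initial ideal of $I$ with respect to $(\mathfrak m,T)$ is $\operatorname{in}_{(\mathfrak m,T)}(I)=\sum_{k\ge 0}\operatorname{in}_{\mathfrak m}(I_k)T^k$.
   Context: For a ring $A$ and ideals $J, I\subseteq A$, $\operatorname{gr}_J(A)=\bigoplus_{n\ge 0} J^n/J^{n+1}$ is the associated graded ring, and the initial (form) ideal of $I$ is $\operatorname{in}_J(I)=\bigoplus_{n\ge0} (I\cap J^n + J^{n+1})/J^{n+1}\subseteq \operatorname{gr}_J(A)$. *)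

theory Defs
  imports "HOL-Algebra.Algebra"
begin

primrec ideal_pow :: "('a, 'b) ring_scheme \<Rightarrow> 'a set \<Rightarrow> nat \<Rightarrow> 'a set" where
  "ideal_pow R I 0 = carrier R"
| "ideal_pow R I (Suc n) = ideal_prod R I (ideal_pow R I n)"

definition local_ring :: "('a, 'b) ring_scheme \<Rightarrow> 'a set \<Rightarrow> bool" where
  "local_ring R m \<longleftrightarrow> cring R \<and> maximalideal m R \<and> (\<forall>M. maximalideal M R \<longrightarrow> M = m)"

text \<open>An element of gr_J(A) is a finitely supported family g with g n a coset
  J^(n+1) + x, x in J^n, i.e. an element of J^n/J^(n+1).\<close>

definition gr_piece :: "('a, 'b) ring_scheme \<Rightarrow> 'a set \<Rightarrow> nat \<Rightarrow> 'a set set" where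
  "gr_piece A J n = (\<lambda>x. ideal_pow A J (Suc n) +>\<^bsub>A\<^esub> x) ` ideal_pow A J n"

definition gr_class :: "('a, 'b) ring_scheme \<Rightarrow> 'a set \<Rightarrow> nat \<Rightarrow> 'a \<Rightarrow> nat \<Rightarrow> 'a set" where
  "gr_class A J n x = (\<lambda>k. ideal_pow A J (Suc k) +>\<^bsub>A\<^esub> (if k = n then x else \<zero>\<^bsub>A\<^esub>))"

definition gr_rep :: "'a set \<Rightarrow> 'a" where
  "gr_rep S = (SOME x. x \<in> S)"

definition gr :: "('a, 'b) ring_scheme \<Rightarrow> 'a set \<Rightarrow> (nat \<Rightarrow> 'a set) ring" where
  "gr A J = \<lparr>
     carrier = {g. (\<forall>n. g n \<in> gr_piece A J n) \<and>
                   finite {n. g n \<noteq> ideal_pow A J (Suc n) +>\<^bsub>A\<^esub> \<zero>\<^bsub>A\<^esub>}},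
     monoid.mult = (\<lambda>g h n. ideal_pow A J (Suc n) +>\<^bsub>A\<^esub>
                (finsum A (\<lambda>i. gr_rep (g i) \<otimes>\<^bsub>A\<^esub> gr_rep (h (n - i))) {..n})),
     one = gr_class A J 0 \<one>\<^bsub>A\<^esub>,
     ring.zero = (\<lambda>n. ideal_pow A J (Suc n) +>\<^bsub>A\<^esub> \<zero>\<^bsub>A\<^esub>),
     add = (\<lambda>g h n. g n <+>\<^bsub>A\<^esub> h n) \<rparr>"

definition in_ideal :: "('a, 'b) ring_scheme \<Rightarrow> 'a set \<Rightarrow> 'a set \<Rightarrow> (nat \<Rightarrow> 'a set) set" where
  "in_ideal A J I = {g \<in> carrier (gr A J).
      \<forall>n. g n \<in> (\<lambda>x. ideal_pow A J (Suc n) +>\<^bsub>A\<^esub> x) ` (I \<inter> ideal_pow A J n)}"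

end

theory Submission
  imports Defs
begin

(*
  The ideal (m, T)^n of R[T] consists exactly of the polynomials whose coefficient of T^k lies
  in m^(n - k). Hence the class of f in (m, T)^n / (m, T)^(n + 1) is determined by the classes
  of its coefficients, the k-th one taken in m^(n - k) / m^(n - k + 1), and collecting these
  classes as the coefficients of a polynomial over gr_m(R) gives the isomorphism. It is
  multiplicative because, modulo m^(d + 1), only products of coefficients whose m-degrees add up
  to d survive in the coefficients of a product.
  An element of I has its k-th coefficient in I_k, so in(I) maps into the sum of the in(I_k) T^k;
  conversely, representatives chosen in the I_k assemble to an element of I because I is
  T-homogeneous.
*)

declare ideal_pow.simps(2)[simp del]

lemma (in ring) rcos_eq_iff_minus:
  assumes "ideal I R" "x \<in> carrier R" "y \<in> carrier R"
  shows "I +> x = I +> y \<longleftrightarrow> x \<ominus> y \<in> I"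
proof -
  interpret I: ideal I R by fact
  have "x \<in> I +> y \<longleftrightarrow> x \<ominus> y \<in> I"
    using I.a_rcos_module_minus[OF ring_axioms] assms by blast
  then show ?thesis
    using I.a_rcos_self I.a_repr_independence' assms by metis
qed

lemma (in ring) gr_rep_rcos:
  assumes "ideal I R" "ideal K R" "I \<subseteq> K" "x \<in> K"
  shows "gr_rep (I +> x) \<in> K" "gr_rep (I +> x) \<ominus> x \<in> I" "I +> gr_rep (I +> x) = I +> x"
proof -
  interpret I: ideal I R by fact
  interpret K: ideal K R by fact
  have x: "x \<in> carrier R" using assms K.Icarr by blast
  then have "x \<in> I +> x" using I.a_rcos_self by blast
  then have "gr_rep (I +> x) \<in> I +> x" unfolding gr_rep_def by (rule someI)
  then obtain i where i: "i \<in> I" "gr_rep (I +> x) = i \<oplus> x"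
    unfolding a_r_coset_def r_coset_def by auto
  show "gr_rep (I +> x) \<in> K" using i assms(3,4) K.a_closed by auto
  show diff: "gr_rep (I +> x) \<ominus> x \<in> I" using i x
    by (simp add: a_minus_def add.m_assoc r_neg)
  show "I +> gr_rep (I +> x) = I +> x"
    using rcos_eq_iff_minus[OF assms(1)] diff i x by simp
qed

lemma (in ring) ideal_finsum_closed:
  assumes "ideal I R" "\<And>i. i \<in> A \<Longrightarrow> F i \<in> I"
  shows "finsum R F A \<in> I"
proof (cases "finite A")
  case True
  interpret I: ideal I R by fact
  from True assms(2) show ?thesis
    by (induct A rule: finite_induct) (auto simp: Pi_def)
qed (simp add: additive_subgroup.zero_closed ideal.axioms(1) assms(1))

lemma (in ring) rcos_finsum_cong:
  assumes "ideal I R" "finite A" "F \<in> A \<rightarrow> carrier R" "H \<in> A \<rightarrow> carrier R"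
    "\<And>i. i \<in> A \<Longrightarrow> I +> F i = I +> H i"
  shows "I +> finsum R F A = I +> finsum R H A"
  using assms(2-5)
proof (induct A rule: finite_induct)
  case (insert x A)
  have "I +> finsum R F (insert x A) = set_add R (I +> F x) (I +> finsum R F A)"
    using insert(1,2,4) ideal.a_rcos_sum[OF assms(1)] by simp
  also have "\<dots> = set_add R (I +> H x) (I +> finsum R H A)" using insert by simp
  also have "\<dots> = I +> finsum R H (insert x A)"
    using insert(1,2,5) ideal.a_rcos_sum[OF assms(1)] by simp
  finally show ?case .
qed simp

lemma (in ring) rcos_finsum_mono_neutral:
  assumes "ideal I R" "finite B" "A \<subseteq> B" "F \<in> B \<rightarrow> carrier R"
    "\<And>i. i \<in> B - A \<Longrightarrow> F i \<in> I"
  shows "I +> finsum R F B = I +> finsum R F A"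
proof -
  have A: "finite A" using assms finite_subset by blast
  have "B = A \<union> (B - A)" using assms(3) by blast
  then have split: "finsum R F B = finsum R F A \<oplus> finsum R F (B - A)"
    using finsum_Un_disjoint[of A "B - A" F] A assms(2-4) by auto
  have "finsum R F (B - A) \<in> I" using ideal_finsum_closed[OF assms(1)] assms(5) by blast
  moreover have c: "finsum R F A \<in> carrier R" "finsum R F (B - A) \<in> carrier R"
    using assms(3,4) by (auto intro: finsum_closed)
  moreover have "finsum R F A \<oplus> finsum R F (B - A) \<ominus> finsum R F A = finsum R F (B - A)"
    using c by algebra
  ultimately show ?thesis using rcos_eq_iff_minus[OF assms(1)] split c by simp
qed

lemma (in ring) finsum_swap:
  assumes "finite A" "finite B" "\<And>i j. i \<in> A \<Longrightarrow> j \<in> B \<Longrightarrow> F i j \<in> carrier R"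
  shows "(\<Oplus>i\<in>A. \<Oplus>j\<in>B. F i j) = (\<Oplus>j\<in>B. \<Oplus>i\<in>A. F i j)"
  using assms(1,3)
proof (induct A rule: finite_induct)
  case empty
  then show ?case using assms(2) by simp
next
  case (insert x A)
  have "(\<Oplus>i\<in>insert x A. \<Oplus>j\<in>B. F i j) = (\<Oplus>j\<in>B. F x j) \<oplus> (\<Oplus>j\<in>B. \<Oplus>i\<in>A. F i j)"
    using insert by (simp add: Pi_def)
  also have "\<dots> = (\<Oplus>j\<in>B. F x j \<oplus> (\<Oplus>i\<in>A. F i j))"
    using insert by (simp add: Pi_def)
  also have "\<dots> = (\<Oplus>j\<in>B. \<Oplus>i\<in>insert x A. F i j)"
    using insert by (intro finsum_cong') (auto simp: Pi_def)
  finally show ?case .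
qed

locale ideal_graded = ring R for R (structure) +
  fixes J assumes J_ideal: "ideal J R"
begin

abbreviation Jpow where "Jpow n \<equiv> ideal_pow R J n"
abbreviation cls where "cls n x \<equiv> Jpow (Suc n) +> x"

lemma Jpow_ideal: "ideal (Jpow n) R"
  by (induct n) (auto simp: ideal_pow.simps(2) oneideal ideal_prod_is_ideal J_ideal)

lemma Jpow_carrier: "Jpow n \<subseteq> carrier R"
  using ideal.Icarr[OF Jpow_ideal] by blast

lemma Jpow_zero_closed: "\<zero> \<in> Jpow n"
  using additive_subgroup.zero_closed[OF ideal.axioms(1)[OF Jpow_ideal]] .

lemma Jpow_add_closed: "x \<in> Jpow n \<Longrightarrow> y \<in> Jpow n \<Longrightarrow> x \<oplus> y \<in> Jpow n"
  using additive_subgroup.a_closed[OF ideal.axioms(1)[OF Jpow_ideal]] by blast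

lemma Jpow_one: "Jpow 1 = J"
  using ideal_prod_one[OF J_ideal] by (simp add: ideal_pow.simps(2))

lemma Jpow_Suc_subset: "Jpow (Suc n) \<subseteq> Jpow n"
  using ideal_prod_inter[OF J_ideal Jpow_ideal[of n]] by (simp add: ideal_pow.simps(2))

lemma Jpow_antimono: "a \<le> b \<Longrightarrow> Jpow b \<subseteq> Jpow a"
  by (induct b rule: dec_induct) (use Jpow_Suc_subset in blast)+

lemma Jpow_mult: "x \<in> Jpow a \<Longrightarrow> y \<in> Jpow b \<Longrightarrow> x \<otimes> y \<in> Jpow (a + b)"
proof (induct a arbitrary: x)
  case 0
  then show ?case using ideal.I_l_closed[OF Jpow_ideal] by simp
next
  case (Suc a)
  have y: "y \<in> carrier R" using Suc(3) Jpow_carrier by blast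
  from Suc(2) have "x \<in> ideal_prod R J (Jpow a)" by (simp add: ideal_pow.simps(2))
  then have "x \<otimes> y \<in> ideal_prod R J (Jpow (a + b))"
  proof (induct x rule: ideal_prod.induct)
    case (prod i j)
    have "i \<in> carrier R" "j \<in> carrier R" using prod ideal.Icarr[OF J_ideal] Jpow_carrier by auto
    then show ?case using Suc(1)[OF prod(2) Suc(3)] ideal_prod.prod[OF prod(1)] y by (simp add: m_assoc)
  next
    case (sum s1 s2)
    have "s1 \<in> carrier R" "s2 \<in> carrier R"
      using sum ideal_prod_in_carrier[OF J_ideal Jpow_ideal] by auto
    then show ?case using sum ideal_prod.sum y by (simp add: l_distr)
  qed
  then show ?case by (simp add: ideal_pow.simps(2))
qed

lemma Jpow_mult_le: "x \<in> Jpow a \<Longrightarrow> y \<in> Jpow b \<Longrightarrow> c \<le> a + b \<Longrightarrow> x \<otimes> y \<in> Jpow c"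
  using Jpow_mult Jpow_antimono by blast

lemma cls_eq_iff: "x \<in> carrier R \<Longrightarrow> y \<in> carrier R \<Longrightarrow> cls n x = cls n y \<longleftrightarrow> x \<ominus> y \<in> Jpow (Suc n)"
  using rcos_eq_iff_minus[OF Jpow_ideal] by blast

lemma cls_eq_zero_iff: "x \<in> carrier R \<Longrightarrow> cls n x = cls n \<zero> \<longleftrightarrow> x \<in> Jpow (Suc n)"
  using cls_eq_iff[of x \<zero>] by (simp add: a_minus_def)

lemma cls_add: "x \<in> carrier R \<Longrightarrow> y \<in> carrier R \<Longrightarrow> set_add R (cls n x) (cls n y) = cls n (x \<oplus> y)"
  using ideal.a_rcos_sum[OF Jpow_ideal] by blast

lemma gr_rep_cls:
  assumes "x \<in> Jpow n"
  shows "gr_rep (cls n x) \<in> Jpow n" "gr_rep (cls n x) \<ominus> x \<in> Jpow (Suc n)"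
    "cls n (gr_rep (cls n x)) = cls n x"
  using gr_rep_rcos[OF Jpow_ideal Jpow_ideal Jpow_Suc_subset assms] by auto

lemma gr_rep_cls_carrier:
  assumes "x \<in> carrier R"
  shows "gr_rep (cls n x) \<in> carrier R" "gr_rep (cls n x) \<ominus> x \<in> Jpow (Suc n)"
  using gr_rep_rcos[OF Jpow_ideal Jpow_ideal[of 0] Jpow_antimono[of 0 "Suc n"]] assms by auto

lemma cls_gr_rep_mult:
  assumes x: "x \<in> Jpow a" and y: "y \<in> Jpow b"
  shows "cls (a + b) (gr_rep (cls a x) \<otimes> gr_rep (cls b y)) = cls (a + b) (x \<otimes> y)"
proof -
  define x' y' where "x' = gr_rep (cls a x)" and "y' = gr_rep (cls b y)"
  have x': "x' \<in> Jpow a" "x' \<ominus> x \<in> Jpow (Suc a)" and y': "y' \<in> Jpow b" "y' \<ominus> y \<in> Jpow (Suc b)"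
    unfolding x'_def y'_def using gr_rep_cls x y by auto
  have c: "x \<in> carrier R" "y \<in> carrier R" "x' \<in> carrier R" "y' \<in> carrier R"
    using x y x' y' Jpow_carrier by auto
  have "(x' \<ominus> x) \<otimes> y' \<in> Jpow (Suc (a + b))" "x \<otimes> (y' \<ominus> y) \<in> Jpow (Suc (a + b))"
    using Jpow_mult_le x y x' y' by auto
  moreover have "x' \<otimes> y' \<ominus> x \<otimes> y = (x' \<ominus> x) \<otimes> y' \<oplus> x \<otimes> (y' \<ominus> y)"
    using c by algebra
  ultimately show ?thesis
    unfolding x'_def[symmetric] y'_def[symmetric] using cls_eq_iff c Jpow_add_closed by simp
qed

lemma gr_carrier_iff:
  "g \<in> carrier (gr R J) \<longleftrightarrow> (\<forall>n. g n \<in> cls n ` Jpow n) \<and> finite {n. g n \<noteq> cls n \<zero>}"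
  unfolding gr_def gr_piece_def by simp

lemma gr_zero: "\<zero>\<^bsub>gr R J\<^esub> = (\<lambda>n. cls n \<zero>)"
  unfolding gr_def by simp

lemma gr_one: "\<one>\<^bsub>gr R J\<^esub> = gr_class R J 0 \<one>"
  unfolding gr_def by simp

lemma gr_add: "g \<oplus>\<^bsub>gr R J\<^esub> h = (\<lambda>n. set_add R (g n) (h n))"
  unfolding gr_def by simp

lemma gr_mult: "g \<otimes>\<^bsub>gr R J\<^esub> h = (\<lambda>n. cls n (\<Oplus>i\<in>{..n}. gr_rep (g i) \<otimes> gr_rep (h (n - i))))"
  unfolding gr_def by simp

lemma gr_class_apply: "gr_class R J n x k = cls k (if k = n then x else \<zero>)"
  unfolding gr_class_def by simp

lemma gr_rep_mem:
  assumes "g \<in> carrier (gr R J)"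
  shows "gr_rep (g n) \<in> Jpow n" "cls n (gr_rep (g n)) = g n"
proof -
  obtain x where "x \<in> Jpow n" "g n = cls n x" using assms unfolding gr_carrier_iff by blast
  then show "gr_rep (g n) \<in> Jpow n" "cls n (gr_rep (g n)) = g n" using gr_rep_cls by auto
qed

lemma gr_rep_carrier: "g \<in> carrier (gr R J) \<Longrightarrow> gr_rep (g n) \<in> carrier R"
  using gr_rep_mem Jpow_carrier by blast

lemma gr_rep_zero: "gr_rep (\<zero>\<^bsub>gr R J\<^esub> n) \<in> Jpow (Suc n)"
proof -
  have "gr_rep (cls n \<zero>) \<in> carrier R" "gr_rep (cls n \<zero>) \<ominus> \<zero> \<in> Jpow (Suc n)"
    using gr_rep_cls_carrier by auto
  then show ?thesis by (simp add: gr_zero a_minus_def)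
qed

lemma gr_rep_eventually_zero:
  assumes g: "g \<in> carrier (gr R J)"
  obtains N where "\<And>n. n > N \<Longrightarrow> gr_rep (g n) \<in> Jpow (Suc n)"
proof -
  have "finite {n. g n \<noteq> cls n \<zero>}" using g by (simp add: gr_carrier_iff)
  then obtain N where N: "\<forall>n \<in> {n. g n \<noteq> cls n \<zero>}. n \<le> N"
    using finite_nat_set_iff_bounded_le by blast
  have "gr_rep (g n) \<in> Jpow (Suc n)" if "n > N" for n
  proof -
    have "cls n (gr_rep (g n)) = cls n \<zero>" using N that gr_rep_mem(2)[OF g, of n] by force
    then show ?thesis using cls_eq_zero_iff gr_rep_carrier[OF g] by blast
  qed
  then show thesis using that by blast
qed

lemma gr_memI:
  assumes "\<And>n. a n \<in> Jpow n" "\<And>n. n > N \<Longrightarrow> a n \<in> Jpow (Suc n)"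
  shows "(\<lambda>n. cls n (a n)) \<in> carrier (gr R J)"
proof -
  have "cls n (a n) = cls n \<zero>" if "n > N" for n
    using assms that cls_eq_zero_iff Jpow_carrier by blast
  then have "{n. cls n (a n) \<noteq> cls n \<zero>} \<subseteq> {..N}"
    by (auto simp: not_le[symmetric])
  then show ?thesis
    unfolding gr_carrier_iff using assms(1) finite_subset by blast
qed

lemma gr_class_carrier: "x \<in> Jpow n \<Longrightarrow> gr_class R J n x \<in> carrier (gr R J)"
  unfolding gr_class_def by (rule gr_memI[where N = n]) (auto simp: Jpow_zero_closed)

lemma gr_add_apply:
  assumes "g \<in> carrier (gr R J)" "h \<in> carrier (gr R J)"
  shows "(g \<oplus>\<^bsub>gr R J\<^esub> h) n = cls n (gr_rep (g n) \<oplus> gr_rep (h n))"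
proof -
  have "set_add R (g n) (h n) = set_add R (cls n (gr_rep (g n))) (cls n (gr_rep (h n)))"
    using gr_rep_mem(2) assms by simp
  then show ?thesis using cls_add gr_rep_carrier assms unfolding gr_add by simp
qed

lemma gr_add_closed:
  assumes g: "g \<in> carrier (gr R J)" and h: "h \<in> carrier (gr R J)"
  shows "g \<oplus>\<^bsub>gr R J\<^esub> h \<in> carrier (gr R J)"
proof -
  obtain N1 where N1: "\<And>n. n > N1 \<Longrightarrow> gr_rep (g n) \<in> Jpow (Suc n)"
    using gr_rep_eventually_zero[OF g] by blast
  obtain N2 where N2: "\<And>n. n > N2 \<Longrightarrow> gr_rep (h n) \<in> Jpow (Suc n)"
    using gr_rep_eventually_zero[OF h] by blast
  have "(\<lambda>n. cls n (gr_rep (g n) \<oplus> gr_rep (h n))) \<in> carrier (gr R J)"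
    by (rule gr_memI[where N = "max N1 N2"])
       (use gr_rep_mem[OF g] gr_rep_mem[OF h] N1 N2 Jpow_add_closed in auto)
  moreover have "g \<oplus>\<^bsub>gr R J\<^esub> h = (\<lambda>n. cls n (gr_rep (g n) \<oplus> gr_rep (h n)))"
    by (rule ext) (rule gr_add_apply[OF g h])
  ultimately show ?thesis by simp
qed

lemma gr_abelian_monoid: "abelian_monoid (gr R J)"
proof (rule abelian_monoidI)
  show "\<zero>\<^bsub>gr R J\<^esub> \<in> carrier (gr R J)"
    unfolding gr_zero using gr_memI[of "\<lambda>n. \<zero>" 0] Jpow_zero_closed by blast
next
  fix x y z assume x: "x \<in> carrier (gr R J)" and y: "y \<in> carrier (gr R J)" and z: "z \<in> carrier (gr R J)"
  show "x \<oplus>\<^bsub>gr R J\<^esub> y \<in> carrier (gr R J)" using gr_add_closed x y .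
  have "set_add R (set_add R (x n) (y n)) (z n) = set_add R (x n) (set_add R (y n) (z n))"
    and "set_add R (x n) (y n) = set_add R (y n) (x n)"
    and "set_add R (cls n \<zero>) (x n) = x n" for n
  proof -
    define a b c where "a = gr_rep (x n)" and "b = gr_rep (y n)" and "c = gr_rep (z n)"
    have abc: "a \<in> carrier R" "b \<in> carrier R" "c \<in> carrier R"
      unfolding a_def b_def c_def using gr_rep_carrier x y z by auto
    have "x n = cls n a" "y n = cls n b" "z n = cls n c"
      unfolding a_def b_def c_def using gr_rep_mem(2) x y z by metis+
    then show "set_add R (set_add R (x n) (y n)) (z n) = set_add R (x n) (set_add R (y n) (z n))"
      and "set_add R (x n) (y n) = set_add R (y n) (x n)"
      and "set_add R (cls n \<zero>) (x n) = x n"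
      using abc by (simp_all add: cls_add a_ac)
  qed
  then show "x \<oplus>\<^bsub>gr R J\<^esub> y \<oplus>\<^bsub>gr R J\<^esub> z = x \<oplus>\<^bsub>gr R J\<^esub> (y \<oplus>\<^bsub>gr R J\<^esub> z)"
    and "x \<oplus>\<^bsub>gr R J\<^esub> y = y \<oplus>\<^bsub>gr R J\<^esub> x"
    and "\<zero>\<^bsub>gr R J\<^esub> \<oplus>\<^bsub>gr R J\<^esub> x = x"
    unfolding gr_add gr_zero by auto
qed

lemma gr_finsum_apply:
  assumes "finite A" "F \<in> A \<rightarrow> carrier (gr R J)" "b \<in> A \<rightarrow> carrier R"
    "\<And>i. i \<in> A \<Longrightarrow> F i n = cls n (b i)"
  shows "finsum (gr R J) F A n = cls n (finsum R b A)"
proof -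
  interpret G: abelian_monoid "gr R J" by (rule gr_abelian_monoid)
  from assms show ?thesis
  proof (induct A rule: finite_induct)
    case (insert x A)
    have "finsum (gr R J) F (insert x A) n = set_add R (F x n) (finsum (gr R J) F A n)"
      using insert(1,2,4) by (simp add: gr_add)
    also have "\<dots> = set_add R (cls n (b x)) (cls n (finsum R b A))" using insert by simp
    also have "\<dots> = cls n (finsum R b (insert x A))"
      using insert(1,2,5) cls_add by simp
    finally show ?case .
  qed (simp add: gr_zero)
qed

lemma gr_mult_closed:
  assumes g: "g \<in> carrier (gr R J)" and h: "h \<in> carrier (gr R J)"
  shows "g \<otimes>\<^bsub>gr R J\<^esub> h \<in> carrier (gr R J)"
proof -
  obtain N1 where N1: "\<And>n. n > N1 \<Longrightarrow> gr_rep (g n) \<in> Jpow (Suc n)"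
    using gr_rep_eventually_zero[OF g] by blast
  obtain N2 where N2: "\<And>n. n > N2 \<Longrightarrow> gr_rep (h n) \<in> Jpow (Suc n)"
    using gr_rep_eventually_zero[OF h] by blast
  have deg: "gr_rep (g i) \<otimes> gr_rep (h (n - i)) \<in> Jpow n" if "i \<le> n" for i n
    using gr_rep_mem(1)[OF g, of i] gr_rep_mem(1)[OF h, of "n - i"] Jpow_mult_le that by simp
  have top: "gr_rep (g i) \<otimes> gr_rep (h (n - i)) \<in> Jpow (Suc n)" if "i \<le> n" "n > N1 + N2" for i n
  proof (cases "i > N1")
    case True
    then show ?thesis
      using N1 gr_rep_mem(1)[OF h, of "n - i"] Jpow_mult_le[of _ "Suc i" _ "n - i" "Suc n"] that by auto
  next
    case False
    then show ?thesis
      using N2[of "n - i"] gr_rep_mem(1)[OF g, of i] Jpow_mult_le[of _ i _ "Suc (n - i)" "Suc n"] that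
      by auto
  qed
  show ?thesis
    unfolding gr_mult
    by (rule gr_memI[where N = "N1 + N2"]; rule ideal_finsum_closed[OF Jpow_ideal]) (use deg top in auto)
qed

end

lemma UP_carrier_iff: "p \<in> carrier (UP S) \<longleftrightarrow> (\<forall>k. p k \<in> carrier S) \<and> (\<exists>N. bound \<zero>\<^bsub>S\<^esub> N p)"
  unfolding UP_def up_def by auto

lemma UP_coeff_apply: "p \<in> carrier (UP S) \<Longrightarrow> coeff (UP S) p k = p k"
  unfolding UP_def by simp

lemma UP_add_eq: "p \<in> carrier (UP S) \<Longrightarrow> q \<in> carrier (UP S) \<Longrightarrow> p \<oplus>\<^bsub>UP S\<^esub> q = (\<lambda>n. p n \<oplus>\<^bsub>S\<^esub> q n)"
  unfolding UP_def by simp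

lemma UP_mult_eq: "p \<in> carrier (UP S) \<Longrightarrow> q \<in> carrier (UP S) \<Longrightarrow>
    p \<otimes>\<^bsub>UP S\<^esub> q = (\<lambda>n. \<Oplus>\<^bsub>S\<^esub>i \<in> {..n}. p i \<otimes>\<^bsub>S\<^esub> q (n - i))"
  unfolding UP_def by simp

lemma UP_one_eq: "\<one>\<^bsub>UP S\<^esub> = (\<lambda>n. if n = 0 then \<one>\<^bsub>S\<^esub> else \<zero>\<^bsub>S\<^esub>)"
  unfolding UP_def by simp

lemma UP_monom_eq: "a \<in> carrier S \<Longrightarrow> monom (UP S) a k = (\<lambda>n. if n = k then a else \<zero>\<^bsub>S\<^esub>)"
  unfolding UP_def by simp

lemma (in UP_ring) truncation_carrier:
  assumes "\<And>k. k \<le> n \<Longrightarrow> a k \<in> carrier R"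
  shows "(\<lambda>k. if k \<le> n then a k else \<zero>) \<in> carrier P"
proof -
  have "bound \<zero> n (\<lambda>k. if k \<le> n then a k else \<zero>)" unfolding bound_def by simp
  then show ?thesis using assms unfolding P_def UP_carrier_iff by auto
qed

lemma (in UP_ring) monom_Suc_eq_mult_var:
  "a \<in> carrier R \<Longrightarrow> up_ring.monom P a (Suc k) = up_ring.monom P \<one> 1 \<otimes>\<^bsub>P\<^esub> up_ring.monom P a k"
  using monom_mult[of \<one> a 1 k] by simp

lemma (in UP_ring) mem_ideal_if_monoms_mem:
  assumes K: "ideal K P" and f: "f \<in> carrier P" and monoms: "\<And>k. up_ring.monom P (up_ring.coeff P f k) k \<in> K"
  shows "f \<in> K"
proof -
  have "(\<Oplus>\<^bsub>P\<^esub> i \<in> {..deg R f}. up_ring.monom P (up_ring.coeff P f i) i) \<in> K"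
    by (rule P.ideal_finsum_closed[OF K monoms])
  then show ?thesis using up_repr[OF f] by simp
qed

locale UP_ideal_graded = UP_cring R P for R (structure) and P (structure) +
  fixes m assumes m_ideal: "ideal m R"
begin

sublocale GR: ideal_graded R m
  by (intro ideal_graded.intro ideal_graded_axioms.intro R.ring_axioms m_ideal)

abbreviation T where "T \<equiv> up_ring.monom P \<one> 1"
abbreviation mT where "mT \<equiv> Idl\<^bsub>P\<^esub> (insert T ((\<lambda>r. up_ring.monom P r 0) ` m))"

definition mT_pow :: "nat \<Rightarrow> (nat \<Rightarrow> 'a) set" where
  "mT_pow n = {f \<in> carrier P. \<forall>k. up_ring.coeff P f k \<in> GR.Jpow (n - k)}"

lemma mT_pow_carrier: "mT_pow n \<subseteq> carrier P"
  unfolding mT_pow_def by blast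

lemma coeff_mT_pow: "f \<in> mT_pow n \<Longrightarrow> up_ring.coeff P f k \<in> GR.Jpow (n - k)"
  unfolding mT_pow_def by blast

lemma mT_pow_0: "mT_pow 0 = carrier P"
  unfolding mT_pow_def by auto

lemma monom_mem_mT_pow: "a \<in> GR.Jpow (n - k) \<Longrightarrow> up_ring.monom P a k \<in> mT_pow n"
  using GR.Jpow_carrier GR.Jpow_zero_closed unfolding mT_pow_def by (auto simp: subset_iff)

lemma mT_pow_mult:
  assumes f: "f \<in> mT_pow a" and g: "g \<in> mT_pow b"
  shows "f \<otimes>\<^bsub>P\<^esub> g \<in> mT_pow (a + b)"
proof -
  have fc: "f \<in> carrier P" and gc: "g \<in> carrier P" using f g mT_pow_carrier by auto
  have "up_ring.coeff P f i \<otimes> up_ring.coeff P g (k - i) \<in> GR.Jpow (a + b - k)" if "i \<le> k" for i k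
    using coeff_mT_pow[OF f, of i] coeff_mT_pow[OF g, of "k - i"] GR.Jpow_mult_le that by simp
  then have "up_ring.coeff P (f \<otimes>\<^bsub>P\<^esub> g) k \<in> GR.Jpow (a + b - k)" for k
    unfolding coeff_mult[OF fc gc] by (intro R.ideal_finsum_closed[OF GR.Jpow_ideal]) simp
  then show ?thesis unfolding mT_pow_def using fc gc by simp
qed

lemma mT_pow_ideal: "ideal (mT_pow n) P"
proof (rule idealI[OF UP_ring])
  have neg: "\<ominus> a \<in> GR.Jpow k" if "a \<in> GR.Jpow k" for a k
    by (rule additive_subgroup.a_inv_closed[OF ideal.axioms(1)[OF GR.Jpow_ideal] that])
  show "subgroup (mT_pow n) (add_monoid P)"
  proof (rule P.add.subgroupI, goal_cases)
    case 1
    then show ?case using mT_pow_carrier by simp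
  next
    case 2
    then show ?case using monom_mem_mT_pow[OF GR.Jpow_zero_closed] by blast
  next
    case (3 f)
    then show ?case using neg unfolding mT_pow_def by (simp add: a_inv_def[symmetric])
  next
    case (4 f g)
    then show ?case using GR.Jpow_add_closed unfolding mT_pow_def by simp
  qed
  show "x \<otimes>\<^bsub>P\<^esub> a \<in> mT_pow n" "a \<otimes>\<^bsub>P\<^esub> x \<in> mT_pow n" if "a \<in> mT_pow n" "x \<in> carrier P" for a x
    using mT_pow_mult[of x 0 a n] mT_pow_mult[of a n x 0] that mT_pow_0 by simp_all
qed

lemma mT_generators_carrier: "insert T ((\<lambda>r. up_ring.monom P r 0) ` m) \<subseteq> carrier P"
  using ideal.Icarr[OF m_ideal] by auto

lemma mT_ideal: "ideal mT P"
  using P.genideal_ideal[OF mT_generators_carrier] .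

lemma mT_generators_mem: "T \<in> mT" "r \<in> m \<Longrightarrow> up_ring.monom P r 0 \<in> mT"
  using P.genideal_self[OF mT_generators_carrier] by auto

lemma mT_eq_mT_pow_1: "mT = mT_pow 1"
proof
  show "mT \<subseteq> mT_pow 1"
    using monom_mem_mT_pow[of \<one> 1 1] monom_mem_mT_pow[of _ 1 0] GR.Jpow_one
    by (intro P.genideal_minimal[OF mT_pow_ideal]) auto
  show "mT_pow 1 \<subseteq> mT"
  proof
    fix f assume f: "f \<in> mT_pow 1"
    show "f \<in> mT"
    proof (rule mem_ideal_if_monoms_mem[OF mT_ideal])
      show fc: "f \<in> carrier P" using f mT_pow_carrier by blast
      fix k
      show "up_ring.monom P (up_ring.coeff P f k) k \<in> mT"
      proof (cases k)
        case 0
        then show ?thesis using coeff_mT_pow[OF f, of 0] GR.Jpow_one mT_generators_mem by simp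
      next
        case (Suc k')
        then show ?thesis
          using monom_Suc_eq_mult_var[OF coeff_closed[OF fc], of k k']
            ideal.I_r_closed[OF mT_ideal mT_generators_mem(1)] coeff_closed[OF fc] by simp
      qed
    qed
  qed
qed

lemma monom_0_mem_ideal_prod:
  "r \<in> ideal_prod R m (GR.Jpow n) \<Longrightarrow> up_ring.monom P r 0 \<in> ideal_prod P mT (mT_pow n)"
proof (induct rule: ideal_prod.induct)
  case (prod i j)
  have "i \<in> carrier R" "j \<in> carrier R" using prod ideal.Icarr[OF m_ideal] GR.Jpow_carrier by auto
  moreover have "up_ring.monom P j 0 \<in> mT_pow n" using prod(2) by (intro monom_mem_mT_pow) simp
  ultimately show ?case
    using ideal_prod.prod[OF mT_generators_mem(2)[OF prod(1)]] monom_mult[of i j 0 0] by simp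
next
  case (sum s1 s2)
  have "s1 \<in> carrier R" "s2 \<in> carrier R"
    using sum R.ideal_prod_in_carrier[OF m_ideal GR.Jpow_ideal] by auto
  then show ?case using ideal_prod.sum[OF sum(2,4)] monom_add by simp
qed

lemma mT_pow_Suc: "mT_pow (Suc n) = ideal_prod P mT (mT_pow n)"
proof
  show "mT_pow (Suc n) \<subseteq> ideal_prod P mT (mT_pow n)"
  proof
    fix f assume f: "f \<in> mT_pow (Suc n)"
    have fc: "f \<in> carrier P" using f mT_pow_carrier by blast
    show "f \<in> ideal_prod P mT (mT_pow n)"
    proof (rule mem_ideal_if_monoms_mem[OF P.ideal_prod_is_ideal[OF mT_ideal mT_pow_ideal] fc])
      fix k
      show "up_ring.monom P (up_ring.coeff P f k) k \<in> ideal_prod P mT (mT_pow n)"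
      proof (cases k)
        case 0
        then show ?thesis
          using coeff_mT_pow[OF f, of 0] monom_0_mem_ideal_prod by (simp add: ideal_pow.simps(2))
      next
        case (Suc k')
        have "up_ring.monom P (up_ring.coeff P f k) k' \<in> mT_pow n"
          using coeff_mT_pow[OF f, of k] Suc by (intro monom_mem_mT_pow) simp
        then show ?thesis
          using ideal_prod.prod[OF mT_generators_mem(1)]
            monom_Suc_eq_mult_var[OF coeff_closed[OF fc], of k k'] Suc by simp
      qed
    qed
  qed
  show "ideal_prod P mT (mT_pow n) \<subseteq> mT_pow (Suc n)"
  proof
    fix x assume "x \<in> ideal_prod P mT (mT_pow n)"
    then show "x \<in> mT_pow (Suc n)"
    proof (induct rule: ideal_prod.induct)
      case (prod i j)
      have "i \<in> mT_pow 1" using prod(1) mT_eq_mT_pow_1 by simp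
      then show ?case using mT_pow_mult[OF _ prod(2), of i 1] by simp
    next
      case (sum s1 s2)
      then show ?case using additive_subgroup.a_closed[OF ideal.axioms(1)[OF mT_pow_ideal]] by simp
    qed
  qed
qed

lemma ideal_pow_mT: "ideal_pow P mT n = mT_pow n"
  by (induct n) (simp_all add: mT_pow_0 mT_pow_Suc ideal_pow.simps(2))

sublocale GP: ideal_graded P mT
  by (intro ideal_graded.intro ideal_graded_axioms.intro UP_ring mT_ideal)

abbreviation G where "G \<equiv> gr R m"
abbreviation UG where "UG \<equiv> UP G"

lemma coeff_P: "f \<in> carrier P \<Longrightarrow> up_ring.coeff P f k = f k"
  unfolding P_def by (rule UP_coeff_apply)

lemma grP_rep_mem:
  assumes "g \<in> carrier (gr P mT)"
  shows "gr_rep (g n) \<in> mT_pow n" "GP.cls n (gr_rep (g n)) = g n"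
  using GP.gr_rep_mem[OF assms] ideal_pow_mT by simp_all

(* The coefficient of T^k in m-degree d comes from (m, T)-degree d + k. *)
definition gr_to_UP :: "(nat \<Rightarrow> (nat \<Rightarrow> 'a) set) \<Rightarrow> nat \<Rightarrow> nat \<Rightarrow> 'a set" where
  "gr_to_UP g = (\<lambda>k d. GR.cls d (up_ring.coeff P (gr_rep (g (d + k))) k))"

lemma cls_coeff_gr_rep:
  assumes f: "f \<in> carrier P"
  shows "GR.cls d (up_ring.coeff P (gr_rep (GP.cls (d + k) f)) k) = GR.cls d (up_ring.coeff P f k)"
proof -
  have r: "gr_rep (GP.cls (d + k) f) \<in> carrier P"
    and "gr_rep (GP.cls (d + k) f) \<ominus>\<^bsub>P\<^esub> f \<in> mT_pow (Suc (d + k))"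
    using GP.gr_rep_cls_carrier[OF f, of "d + k"] ideal_pow_mT by auto
  then have "up_ring.coeff P (gr_rep (GP.cls (d + k) f) \<ominus>\<^bsub>P\<^esub> f) k \<in> GR.Jpow (Suc d)"
    using coeff_mT_pow[of _ "Suc (d + k)" k] by (simp add: Suc_diff_le)
  then have "up_ring.coeff P (gr_rep (GP.cls (d + k) f)) k \<ominus> up_ring.coeff P f k \<in> GR.Jpow (Suc d)"
    using r f by simp
  then show ?thesis using GR.cls_eq_iff coeff_closed r f by blast
qed

lemma gr_to_UP_gr_class:
  assumes "f \<in> carrier P"
  shows "gr_to_UP (gr_class P mT n f) k d = GR.cls d (if d + k = n then up_ring.coeff P f k else \<zero>)"
proof -
  have "gr_to_UP (gr_class P mT n f) k d =
      GR.cls d (up_ring.coeff P (if d + k = n then f else \<zero>\<^bsub>P\<^esub>) k)"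
    unfolding gr_to_UP_def gr_class_def using cls_coeff_gr_rep assms by simp
  then show ?thesis by (cases "d + k = n") simp_all
qed

lemma gr_to_UP_coeff_carrier:
  assumes g: "g \<in> carrier (gr P mT)"
  shows "gr_to_UP g k \<in> carrier G"
proof -
  obtain N where N: "\<And>n. n > N \<Longrightarrow> gr_rep (g n) \<in> mT_pow (Suc n)"
    using GP.gr_rep_eventually_zero[OF g] ideal_pow_mT by metis
  show ?thesis
    unfolding gr_to_UP_def
  proof (rule GR.gr_memI[where N = N])
    fix d show "up_ring.coeff P (gr_rep (g (d + k))) k \<in> GR.Jpow d"
      using coeff_mT_pow[OF grP_rep_mem(1)[OF g, of "d + k"], of k] by simp
  next
    fix d assume "d > N"
    then show "up_ring.coeff P (gr_rep (g (d + k))) k \<in> GR.Jpow (Suc d)"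
      using N[of "d + k"] coeff_mT_pow[of _ "Suc (d + k)" k] by (simp add: Suc_diff_le)
  qed
qed

lemma gr_to_UP_carrier:
  assumes g: "g \<in> carrier (gr P mT)"
  shows "gr_to_UP g \<in> carrier UG"
proof -
  obtain N where N: "\<And>n. n > N \<Longrightarrow> gr_rep (g n) \<in> mT_pow (Suc n)"
    using GP.gr_rep_eventually_zero[OF g] ideal_pow_mT by metis
  have "gr_to_UP g k = \<zero>\<^bsub>G\<^esub>" if "k > N" for k
  proof
    fix d
    have "up_ring.coeff P (gr_rep (g (d + k))) k \<in> GR.Jpow (Suc d)"
      using N[of "d + k"] that coeff_mT_pow[of _ "Suc (d + k)" k] by (simp add: Suc_diff_le)
    then show "gr_to_UP g k d = \<zero>\<^bsub>G\<^esub> d"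
      unfolding gr_to_UP_def GR.gr_zero using GR.cls_eq_zero_iff GR.Jpow_carrier by blast
  qed
  then have "bound \<zero>\<^bsub>G\<^esub> N (gr_to_UP g)" by blast
  then show ?thesis unfolding UP_carrier_iff using gr_to_UP_coeff_carrier[OF g] by blast
qed

lemma gr_to_UP_inj:
  assumes g: "g \<in> carrier (gr P mT)" and h: "h \<in> carrier (gr P mT)" and eq: "gr_to_UP g = gr_to_UP h"
  shows "g = h"
proof
  fix n
  have rg: "gr_rep (g n) \<in> carrier P" and rh: "gr_rep (h n) \<in> carrier P"
    using grP_rep_mem(1)[OF g] grP_rep_mem(1)[OF h] mT_pow_carrier by auto
  have "up_ring.coeff P (gr_rep (g n) \<ominus>\<^bsub>P\<^esub> gr_rep (h n)) k \<in> GR.Jpow (Suc n - k)" for k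
  proof (cases "k \<le> n")
    case True
    then obtain d where n: "n = d + k" using le_Suc_ex by (metis add.commute)
    have "GR.cls d (up_ring.coeff P (gr_rep (g n)) k) = GR.cls d (up_ring.coeff P (gr_rep (h n)) k)"
      using fun_cong[OF fun_cong[OF eq, of k], of d] unfolding gr_to_UP_def n by simp
    then show ?thesis using GR.cls_eq_iff coeff_closed rg rh n by (simp add: Suc_diff_le)
  qed (use rg rh in simp)
  then have "gr_rep (g n) \<ominus>\<^bsub>P\<^esub> gr_rep (h n) \<in> GP.Jpow (Suc n)"
    using rg rh ideal_pow_mT unfolding mT_pow_def by simp
  then show "g n = h n" using GP.cls_eq_iff[OF rg rh] grP_rep_mem(2) g h by metis
qed

definition rep_poly :: "(nat \<Rightarrow> nat \<Rightarrow> 'a set) \<Rightarrow> nat \<Rightarrow> nat \<Rightarrow> 'a" where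
  "rep_poly p n = (\<lambda>k. if k \<le> n then gr_rep (p k (n - k)) else \<zero>)"

definition UP_to_gr :: "(nat \<Rightarrow> nat \<Rightarrow> 'a set) \<Rightarrow> nat \<Rightarrow> (nat \<Rightarrow> 'a) set" where
  "UP_to_gr p = (\<lambda>n. GP.cls n (rep_poly p n))"

lemma rep_poly_mT_pow:
  assumes p: "p \<in> carrier UG"
  shows "rep_poly p n \<in> mT_pow n"
proof -
  have mem: "rep_poly p n k \<in> GR.Jpow (n - k)" for k
    using GR.gr_rep_mem(1) p GR.Jpow_zero_closed unfolding UP_carrier_iff rep_poly_def by auto
  have "gr_rep (p k (n - k)) \<in> carrier R" for k
    using GR.gr_rep_carrier p unfolding UP_carrier_iff by blast
  then have c: "rep_poly p n \<in> carrier P"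
    unfolding rep_poly_def by (rule truncation_carrier)
  then show ?thesis using mem coeff_P[OF c] unfolding mT_pow_def by simp
qed

lemma UP_to_gr_carrier:
  assumes p: "p \<in> carrier UG"
  shows "UP_to_gr p \<in> carrier (gr P mT)"
proof -
  have pk: "p k \<in> carrier G" for k using p unfolding UP_carrier_iff by blast
  obtain K where K: "bound \<zero>\<^bsub>G\<^esub> K p" using p unfolding UP_carrier_iff by blast
  have "\<forall>k. \<exists>N. \<forall>d > N. gr_rep (p k d) \<in> GR.Jpow (Suc d)"
    using GR.gr_rep_eventually_zero[OF pk] by metis
  then obtain N where N: "\<And>k d. d > N k \<Longrightarrow> gr_rep (p k d) \<in> GR.Jpow (Suc d)"
    by metis
  have top: "gr_rep (p k (n - k)) \<in> GR.Jpow (Suc (n - k))"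
    if "k \<le> n" "n > K + (\<Sum>j\<le>K. N j)" for k n
  proof (cases "k \<le> K")
    case True
    then have "N k \<le> (\<Sum>j\<le>K. N j)" by (intro member_le_sum) auto
    then show ?thesis using N that True by simp
  next
    case False
    then show ?thesis using K GR.gr_rep_zero unfolding bound_def by simp
  qed
  show ?thesis
    unfolding UP_to_gr_def
  proof (rule GP.gr_memI[where N = "K + (\<Sum>j\<le>K. N j)"])
    fix n show "rep_poly p n \<in> GP.Jpow n" using rep_poly_mT_pow[OF p] ideal_pow_mT by simp
  next
    fix n assume n: "n > K + (\<Sum>j\<le>K. N j)"
    have c: "rep_poly p n \<in> carrier P" using rep_poly_mT_pow[OF p] mT_pow_carrier by blast
    have "up_ring.coeff P (rep_poly p n) k \<in> GR.Jpow (Suc n - k)" for k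
      using top[OF _ n, of k] GR.Jpow_zero_closed coeff_P[OF c]
      unfolding rep_poly_def by (simp add: Suc_diff_le)
    then show "rep_poly p n \<in> GP.Jpow (Suc n)" using ideal_pow_mT c unfolding mT_pow_def by simp
  qed
qed

lemma UP_to_gr_apply_eq:
  assumes p: "p \<in> carrier UG"
    and x: "\<And>k d. x k d \<in> GR.Jpow d" "\<And>k d. p k d = GR.cls d (x k d)"
  shows "UP_to_gr p n = GP.cls n (\<lambda>k. if k \<le> n then x k (n - k) else \<zero>)"
proof -
  define f where "f = (\<lambda>k. if k \<le> n then x k (n - k) else \<zero>)"
  have f: "f \<in> carrier P"
    unfolding f_def by (rule truncation_carrier) (use x(1) GR.Jpow_carrier in blast)
  have r: "rep_poly p n \<in> carrier P" using rep_poly_mT_pow[OF p] mT_pow_carrier by blast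
  have "up_ring.coeff P (rep_poly p n \<ominus>\<^bsub>P\<^esub> f) k \<in> GR.Jpow (Suc n - k)" for k
  proof -
    have coeff: "up_ring.coeff P (rep_poly p n \<ominus>\<^bsub>P\<^esub> f) k = rep_poly p n k \<ominus> f k"
      using coeff_minus[OF r f] coeff_P[OF r] coeff_P[OF f] by simp
    show ?thesis
    proof (cases "k \<le> n")
      case True
      have "gr_rep (p k (n - k)) \<ominus> x k (n - k) \<in> GR.Jpow (Suc (n - k))"
        using GR.gr_rep_cls(2) x by simp
      then show ?thesis using True unfolding coeff by (simp add: rep_poly_def f_def Suc_diff_le)
    qed (unfold coeff, simp add: rep_poly_def f_def)
  qed
  then have "rep_poly p n \<ominus>\<^bsub>P\<^esub> f \<in> GP.Jpow (Suc n)"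
    using r f ideal_pow_mT unfolding mT_pow_def by simp
  then show ?thesis unfolding UP_to_gr_def f_def[symmetric] using GP.cls_eq_iff r f by blast
qed

lemma gr_to_UP_UP_to_gr:
  assumes p: "p \<in> carrier UG"
  shows "gr_to_UP (UP_to_gr p) = p"
proof (intro ext)
  fix k d
  have c: "rep_poly p (d + k) \<in> carrier P" using rep_poly_mT_pow[OF p] mT_pow_carrier by blast
  have "gr_to_UP (UP_to_gr p) k d = GR.cls d (up_ring.coeff P (rep_poly p (d + k)) k)"
    unfolding gr_to_UP_def UP_to_gr_def by (rule cls_coeff_gr_rep[OF c])
  also have "\<dots> = GR.cls d (gr_rep (p k d))" unfolding coeff_P[OF c] by (simp add: rep_poly_def)
  also have "\<dots> = p k d" using GR.gr_rep_mem(2) p unfolding UP_carrier_iff by blast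
  finally show "gr_to_UP (UP_to_gr p) k d = p k d" .
qed

lemma gr_to_UP_bij: "bij_betw gr_to_UP (carrier (gr P mT)) (carrier UG)"
proof (rule bij_betw_imageI)
  show "inj_on gr_to_UP (carrier (gr P mT))" using gr_to_UP_inj by (rule inj_onI)
  show "gr_to_UP ` carrier (gr P mT) = carrier UG"
  proof
    show "gr_to_UP ` carrier (gr P mT) \<subseteq> carrier UG" using gr_to_UP_carrier by blast
    show "carrier UG \<subseteq> gr_to_UP ` carrier (gr P mT)"
    proof
      fix p assume "p \<in> carrier UG"
      then show "p \<in> gr_to_UP ` carrier (gr P mT)"
        using gr_to_UP_UP_to_gr UP_to_gr_carrier by (metis imageI)
    qed
  qed
qed

lemma gr_to_UP_one: "gr_to_UP \<one>\<^bsub>gr P mT\<^esub> = \<one>\<^bsub>UG\<^esub>"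
proof (intro ext)
  fix k d
  show "gr_to_UP \<one>\<^bsub>gr P mT\<^esub> k d = \<one>\<^bsub>UG\<^esub> k d"
    unfolding GP.gr_one gr_to_UP_gr_class[OF P.one_closed] UP_one_eq GR.gr_one GR.gr_class_apply GR.gr_zero
    by (cases "k = 0") auto
qed

lemma gr_to_UP_add:
  assumes g: "g \<in> carrier (gr P mT)" and h: "h \<in> carrier (gr P mT)"
  shows "gr_to_UP (g \<oplus>\<^bsub>gr P mT\<^esub> h) = gr_to_UP g \<oplus>\<^bsub>UG\<^esub> gr_to_UP h"
proof (intro ext)
  fix k d
  have r: "gr_rep (g n) \<in> carrier P" "gr_rep (h n) \<in> carrier P" for n
    using GP.gr_rep_carrier g h by auto
  have "gr_to_UP (g \<oplus>\<^bsub>gr P mT\<^esub> h) k d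
      = GR.cls d (up_ring.coeff P (gr_rep (g (d + k))) k \<oplus> up_ring.coeff P (gr_rep (h (d + k))) k)"
    unfolding gr_to_UP_def GP.gr_add_apply[OF g h] using cls_coeff_gr_rep r by simp
  also have "\<dots> = set_add R (gr_to_UP g k d) (gr_to_UP h k d)"
    unfolding gr_to_UP_def using GR.cls_add r by simp
  also have "\<dots> = (gr_to_UP g \<oplus>\<^bsub>UG\<^esub> gr_to_UP h) k d"
    unfolding UP_add_eq[OF gr_to_UP_carrier[OF g] gr_to_UP_carrier[OF h]] GR.gr_add by simp
  finally show "gr_to_UP (g \<oplus>\<^bsub>gr P mT\<^esub> h) k d = (gr_to_UP g \<oplus>\<^bsub>UG\<^esub> gr_to_UP h) k d" .
qed

lemma cls_coeff_convolution:
  assumes f: "\<And>i. f i \<in> mT_pow i" and g: "\<And>i. g i \<in> mT_pow i"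
  shows "GR.cls d (up_ring.coeff P (\<Oplus>\<^bsub>P\<^esub>i \<in> {..d + k}. f i \<otimes>\<^bsub>P\<^esub> g (d + k - i)) k) =
    GR.cls d (\<Oplus>j \<in> {..k}. \<Oplus>e \<in> {..d}.
      up_ring.coeff P (f (e + j)) j \<otimes> up_ring.coeff P (g (d + k - (e + j))) (k - j))"
proof -
  define n where "n = d + k"
  define t where "t i j = up_ring.coeff P (f i) j \<otimes> up_ring.coeff P (g (n - i)) (k - j)" for i j
  have fc: "f i \<in> carrier P" and gc: "g i \<in> carrier P" for i
    using f g mT_pow_carrier by auto
  have t: "t i j \<in> carrier R" for i j unfolding t_def using fc gc by simp
  have "up_ring.coeff P (\<Oplus>\<^bsub>P\<^esub>i \<in> {..n}. f i \<otimes>\<^bsub>P\<^esub> g (n - i)) k = (\<Oplus>i \<in> {..n}. \<Oplus>j \<in> {..k}. t i j)"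
    unfolding t_def using coeff_finsum[of "{..n}" "\<lambda>i. f i \<otimes>\<^bsub>P\<^esub> g (n - i)" k] fc gc
    by (simp add: Pi_def)
  also have "\<dots> = (\<Oplus>j \<in> {..k}. \<Oplus>i \<in> {..n}. t i j)"
    using t by (intro R.finsum_swap) auto
  finally have "GR.cls d (up_ring.coeff P (\<Oplus>\<^bsub>P\<^esub>i \<in> {..n}. f i \<otimes>\<^bsub>P\<^esub> g (n - i)) k) =
      GR.cls d (\<Oplus>j \<in> {..k}. \<Oplus>i \<in> {..n}. t i j)" by (simp only:)
  also have "\<dots> = GR.cls d (\<Oplus>j \<in> {..k}. \<Oplus>e \<in> {..d}. t (e + j) j)"
  proof (rule R.rcos_finsum_cong[OF GR.Jpow_ideal])
    fix j assume j: "j \<in> {..k}"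
    have "GR.cls d (\<Oplus>i \<in> {..n}. t i j) = GR.cls d (\<Oplus>i \<in> (\<lambda>e. e + j) ` {..d}. t i j)"
    proof (rule R.rcos_finsum_mono_neutral[OF GR.Jpow_ideal])
      fix i assume i: "i \<in> {..n} - (\<lambda>e. e + j) ` {..d}"
      \<comment> \<open>the \<open>m\<close>-adic orders of the two factors of \<open>t i j\<close> add up to more than \<open>d\<close>\<close>
      have "\<not> (j \<le> i \<and> i - j \<le> d)"
      proof
        assume "j \<le> i \<and> i - j \<le> d"
        then have "i \<in> (\<lambda>e. e + j) ` {..d}" by (intro image_eqI[of _ _ "i - j"]) auto
        then show False using i by blast
      qed
      then have "Suc d \<le> (i - j) + ((n - i) - (k - j))" using i j unfolding n_def by auto
      then show "t i j \<in> GR.Jpow (Suc d)"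
        unfolding t_def using coeff_mT_pow[OF f] coeff_mT_pow[OF g] GR.Jpow_mult_le by blast
    qed (use t j n_def in auto)
    also have "(\<Oplus>i \<in> (\<lambda>e. e + j) ` {..d}. t i j) = (\<Oplus>e \<in> {..d}. t (e + j) j)"
      using t by (intro R.finsum_reindex) auto
    finally show "GR.cls d (\<Oplus>i \<in> {..n}. t i j) = GR.cls d (\<Oplus>e \<in> {..d}. t (e + j) j)" .
  qed (use t in auto)
  finally show ?thesis unfolding t_def n_def .
qed

lemma gr_to_UP_mult:
  assumes g: "g \<in> carrier (gr P mT)" and h: "h \<in> carrier (gr P mT)"
  shows "gr_to_UP (g \<otimes>\<^bsub>gr P mT\<^esub> h) = gr_to_UP g \<otimes>\<^bsub>UG\<^esub> gr_to_UP h"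
proof (intro ext)
  fix k d
  define a where "a i j = up_ring.coeff P (gr_rep (g i)) j" for i j
  define b where "b i j = up_ring.coeff P (gr_rep (h i)) j" for i j
  have a: "a i j \<in> GR.Jpow (i - j)" and b: "b i j \<in> GR.Jpow (i - j)" for i j
    unfolding a_def b_def using coeff_mT_pow grP_rep_mem(1) g h by auto
  have ab: "a i j \<in> carrier R" "b i j \<in> carrier R" for i j
    using a[of i j] b[of i j] GR.Jpow_carrier by auto
  have rep: "gr_rep (GR.cls e x) \<in> carrier R" if "x \<in> GR.Jpow e" for x e
    using GR.gr_rep_cls(1)[OF that] GR.Jpow_carrier by auto
  have gk: "gr_to_UP g j \<in> carrier G" "gr_to_UP h j \<in> carrier G" for j
    using gr_to_UP_coeff_carrier g h by auto
  have S: "(\<Oplus>\<^bsub>P\<^esub>i \<in> {..d + k}. gr_rep (g i) \<otimes>\<^bsub>P\<^esub> gr_rep (h (d + k - i))) \<in> carrier P"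
    using GP.gr_rep_carrier g h by (intro P.finsum_closed) auto
  have "gr_to_UP (g \<otimes>\<^bsub>gr P mT\<^esub> h) k d =
      GR.cls d (\<Oplus>j \<in> {..k}. \<Oplus>e \<in> {..d}. a (e + j) j \<otimes> b (d + k - (e + j)) (k - j))"
    unfolding gr_to_UP_def GP.gr_mult cls_coeff_gr_rep[OF S] a_def b_def
    by (rule cls_coeff_convolution) (use grP_rep_mem(1) g h in auto)
  also have "\<dots> = GR.cls d (\<Oplus>j \<in> {..k}. \<Oplus>e \<in> {..d}.
      gr_rep (gr_to_UP g j e) \<otimes> gr_rep (gr_to_UP h (k - j) (d - e)))"
  proof (rule R.rcos_finsum_cong[OF GR.Jpow_ideal], rule_tac [4] R.rcos_finsum_cong[OF GR.Jpow_ideal])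
    fix j e assume j: "j \<in> {..k}" and e: "e \<in> {..d}"
    then have "d + k - (e + j) = (d - e) + (k - j)" by auto
    then show "GR.cls d (a (e + j) j \<otimes> b (d + k - (e + j)) (k - j)) =
        GR.cls d (gr_rep (gr_to_UP g j e) \<otimes> gr_rep (gr_to_UP h (k - j) (d - e)))"
      using GR.cls_gr_rep_mult[OF a[of "e + j" j] b[of "d + k - (e + j)" "k - j"]] e
      unfolding gr_to_UP_def a_def b_def by (simp add: add.commute)
  qed (use ab rep gk GR.gr_rep_carrier in \<open>auto intro!: R.finsum_closed\<close>)
  also have "\<dots> = (\<Oplus>\<^bsub>G\<^esub>j \<in> {..k}. gr_to_UP g j \<otimes>\<^bsub>G\<^esub> gr_to_UP h (k - j)) d"
    using gk GR.gr_mult_closed GR.gr_rep_carrier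
    by (intro GR.gr_finsum_apply[symmetric]) (auto simp: GR.gr_mult intro!: R.finsum_closed)
  also have "\<dots> = (gr_to_UP g \<otimes>\<^bsub>UG\<^esub> gr_to_UP h) k d"
    unfolding UP_mult_eq[OF gr_to_UP_carrier[OF g] gr_to_UP_carrier[OF h]] ..
  finally show "gr_to_UP (g \<otimes>\<^bsub>gr P mT\<^esub> h) k d = (gr_to_UP g \<otimes>\<^bsub>UG\<^esub> gr_to_UP h) k d" .
qed

lemma in_ideal_gr_iff:
  "g \<in> in_ideal R m K \<longleftrightarrow> g \<in> carrier G \<and> (\<forall>d. g d \<in> GR.cls d ` (K \<inter> GR.Jpow d))"
  unfolding in_ideal_def by simp

lemma in_ideal_grP_iff:
  "g \<in> in_ideal P mT I \<longleftrightarrow> g \<in> carrier (gr P mT) \<and> (\<forall>n. g n \<in> GP.cls n ` (I \<inter> mT_pow n))"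
  unfolding in_ideal_def ideal_pow_mT by simp

context
  fixes I Ik
  assumes Ik: "\<And>k. ideal (Ik k) R"
    and I: "I = {f \<in> carrier P. \<forall>k. up_ring.coeff P f k \<in> Ik k}"
begin

lemma gr_to_UP_in_ideal:
  assumes g: "g \<in> in_ideal P mT I"
  shows "gr_to_UP g k \<in> in_ideal R m (Ik k)"
  unfolding in_ideal_gr_iff
proof (intro conjI allI)
  show "gr_to_UP g k \<in> carrier G" using g gr_to_UP_coeff_carrier in_ideal_grP_iff by blast
  fix d
  obtain f where f: "f \<in> I" "f \<in> mT_pow (d + k)" "g (d + k) = GP.cls (d + k) f"
    using g in_ideal_grP_iff by blast
  have "gr_to_UP g k d = GR.cls d (up_ring.coeff P f k)"
    unfolding gr_to_UP_def f(3) using cls_coeff_gr_rep f(1) I by blast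
  moreover have "up_ring.coeff P f k \<in> Ik k \<inter> GR.Jpow d"
    using f(1) I coeff_mT_pow[OF f(2), of k] by simp
  ultimately show "gr_to_UP g k d \<in> GR.cls d ` (Ik k \<inter> GR.Jpow d)" by blast
qed

lemma UP_to_gr_in_ideal:
  assumes p: "p \<in> carrier UG" and pk: "\<And>k. p k \<in> in_ideal R m (Ik k)"
  shows "UP_to_gr p \<in> in_ideal P mT I"
  unfolding in_ideal_grP_iff
proof (intro conjI allI)
  show "UP_to_gr p \<in> carrier (gr P mT)" using UP_to_gr_carrier[OF p] .
  have "\<forall>k d. \<exists>x. x \<in> Ik k \<inter> GR.Jpow d \<and> p k d = GR.cls d x"
    using pk unfolding in_ideal_gr_iff by blast
  then obtain x where x: "\<And>k d. x k d \<in> Ik k \<inter> GR.Jpow d" "\<And>k d. p k d = GR.cls d (x k d)"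
    by metis
  fix n
  define f where "f = (\<lambda>k. if k \<le> n then x k (n - k) else \<zero>)"
  have f: "f \<in> carrier P"
    unfolding f_def by (rule truncation_carrier) (use x(1) GR.Jpow_carrier in blast)
  have "f \<in> I"
    unfolding I using f coeff_P[OF f] x(1) ideal.axioms(1)[OF Ik]
    by (auto simp: f_def additive_subgroup.zero_closed)
  moreover have "f \<in> mT_pow n"
    unfolding mT_pow_def using f coeff_P[OF f] x(1) GR.Jpow_zero_closed by (auto simp: f_def)
  moreover have "UP_to_gr p n = GP.cls n f"
    unfolding f_def using x by (intro UP_to_gr_apply_eq[OF p]) auto
  ultimately show "UP_to_gr p n \<in> GP.cls n ` (I \<inter> mT_pow n)" by blast
qed

lemma gr_to_UP_in_ideal_image:
  "gr_to_UP ` in_ideal P mT I = {p \<in> carrier UG. \<forall>k. up_ring.coeff UG p k \<in> in_ideal R m (Ik k)}"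
proof
  show "gr_to_UP ` in_ideal P mT I \<subseteq> {p \<in> carrier UG. \<forall>k. up_ring.coeff UG p k \<in> in_ideal R m (Ik k)}"
  proof
    fix p assume "p \<in> gr_to_UP ` in_ideal P mT I"
    then obtain g where g: "g \<in> in_ideal P mT I" and p: "p = gr_to_UP g" by blast
    then have "p \<in> carrier UG" using gr_to_UP_carrier in_ideal_grP_iff by blast
    then show "p \<in> {p \<in> carrier UG. \<forall>k. up_ring.coeff UG p k \<in> in_ideal R m (Ik k)}"
      using gr_to_UP_in_ideal[OF g] UP_coeff_apply[OF \<open>p \<in> carrier UG\<close>] p by simp
  qed
  show "{p \<in> carrier UG. \<forall>k. up_ring.coeff UG p k \<in> in_ideal R m (Ik k)} \<subseteq> gr_to_UP ` in_ideal P mT I"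
  proof
    fix p assume "p \<in> {p \<in> carrier UG. \<forall>k. up_ring.coeff UG p k \<in> in_ideal R m (Ik k)}"
    then have p: "p \<in> carrier UG" and "\<And>k. p k \<in> in_ideal R m (Ik k)"
      using UP_coeff_apply[of p G] by auto
    then have "UP_to_gr p \<in> in_ideal P mT I" by (rule UP_to_gr_in_ideal)
    then show "p \<in> gr_to_UP ` in_ideal P mT I" using gr_to_UP_UP_to_gr[OF p] by (metis imageI)
  qed
qed

end

lemma gr_to_UP_T: "gr_to_UP (gr_class P mT 1 T) = up_ring.monom UG \<one>\<^bsub>G\<^esub> 1"
proof (intro ext)
  fix k d
  have "\<one>\<^bsub>G\<^esub> \<in> carrier G" unfolding GR.gr_one by (rule GR.gr_class_carrier) simp
  have "gr_to_UP (gr_class P mT 1 T) k d = (if k = 1 then \<one>\<^bsub>G\<^esub> else \<zero>\<^bsub>G\<^esub>) d"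
    unfolding gr_to_UP_gr_class[OF monom_closed[OF R.one_closed]] GR.gr_one GR.gr_class_apply GR.gr_zero
    by (cases "k = 1") auto
  also have "\<dots> = up_ring.monom UG \<one>\<^bsub>G\<^esub> 1 k d"
    by (simp only: UP_monom_eq[OF \<open>\<one>\<^bsub>G\<^esub> \<in> carrier G\<close>])
  finally show "gr_to_UP (gr_class P mT 1 T) k d = up_ring.monom UG \<one>\<^bsub>G\<^esub> 1 k d" .
qed

lemma gr_to_UP_const:
  assumes r: "r \<in> GR.Jpow n"
  shows "gr_to_UP (gr_class P mT n (up_ring.monom P r 0)) = up_ring.monom UG (gr_class R m n r) 0"
proof (intro ext)
  fix k d
  have rc: "r \<in> carrier R" using r GR.Jpow_carrier by blast
  then have "gr_to_UP (gr_class P mT n (up_ring.monom P r 0)) k d =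
      (if k = 0 then gr_class R m n r else \<zero>\<^bsub>G\<^esub>) d"
    unfolding gr_to_UP_gr_class[OF monom_closed[OF rc]] GR.gr_class_apply GR.gr_zero by (cases "k = 0") auto
  also have "\<dots> = up_ring.monom UG (gr_class R m n r) 0 k d"
    by (simp only: UP_monom_eq[OF GR.gr_class_carrier[OF r]])
  finally show "gr_to_UP (gr_class P mT n (up_ring.monom P r 0)) k d =
      up_ring.monom UG (gr_class R m n r) 0 k d" .
qed

lemma gr_to_UP_iso: "gr_to_UP \<in> ring_iso (gr P mT) UG"
  unfolding ring_iso_def
  using gr_to_UP_carrier gr_to_UP_mult gr_to_UP_add gr_to_UP_one gr_to_UP_bij
  by (auto intro!: ring_hom_memI)

end

theorem lemma2p4:
  fixes R :: "('a, 'b) ring_scheme" and m :: "'a set"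
    and I :: "(nat \<Rightarrow> 'a) set" and Ik :: "nat \<Rightarrow> 'a set"
  assumes "noetherian_ring R" and "local_ring R m"
    and "\<And>k. ideal (Ik k) R"
    and "ideal I (UP R)"
    and "I = {p \<in> carrier (UP R). \<forall>k. coeff (UP R) p k \<in> Ik k}"
  shows "\<exists>\<phi>. \<phi> \<in> ring_iso
              (gr (UP R) (Idl\<^bsub>UP R\<^esub> (insert (monom (UP R) \<one>\<^bsub>R\<^esub> 1) ((\<lambda>r. monom (UP R) r 0) ` m))))
              (UP (gr R m))
          \<and> \<phi> (gr_class (UP R) (Idl\<^bsub>UP R\<^esub> (insert (monom (UP R) \<one>\<^bsub>R\<^esub> 1) ((\<lambda>r. monom (UP R) r 0) ` m)))
                  1 (monom (UP R) \<one>\<^bsub>R\<^esub> 1))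
             = monom (UP (gr R m)) \<one>\<^bsub>gr R m\<^esub> 1
          \<and> (\<forall>n. \<forall>r \<in> ideal_pow R m n.
               \<phi> (gr_class (UP R) (Idl\<^bsub>UP R\<^esub> (insert (monom (UP R) \<one>\<^bsub>R\<^esub> 1) ((\<lambda>r. monom (UP R) r 0) ` m)))
                    n (monom (UP R) r 0))
               = monom (UP (gr R m)) (gr_class R m n r) 0)
          \<and> \<phi> ` in_ideal (UP R) (Idl\<^bsub>UP R\<^esub> (insert (monom (UP R) \<one>\<^bsub>R\<^esub> 1) ((\<lambda>r. monom (UP R) r 0) ` m))) I
             = {p \<in> carrier (UP (gr R m)). \<forall>k. coeff (UP (gr R m)) p k \<in> in_ideal R m (Ik k)}"
proof -
  have "cring R" and "ideal m R"
    using assms(2) maximalideal.axioms(1) unfolding local_ring_def by auto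
  then interpret UP_ideal_graded R "UP R" m
    by (intro UP_ideal_graded.intro UP_cring.intro UP_ideal_graded_axioms.intro)
  show ?thesis
    using gr_to_UP_iso gr_to_UP_T gr_to_UP_const gr_to_UP_in_ideal_image[OF assms(3,5)] by blast
qed

end
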